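(* Let $n\ge 1$, let $f,g:\mathbb{R}^n\to\mathbb{R}$ be continuously differentiable with $f(\mathbf 0)=0$ and $g(\mathbf x)\neq 0$ for all $\mathbf x\in\mathbb{R}^n$, and consider the control system $\dot{\mathbf x}=\mathbf f(\mathbf x)+\mathbf g(\mathbf x)u$ with $\mathbf f(\mathbf x)=A_0\mathbf x+e_n f(\mathbf x)$, $\mathbf g(\mathbf x)=e_n g(\mathbf x)$ (notation in context). Let $N\in\mathbb{N}$, $T>0$, $\underline t\ge 0$, $\overline t=\underline t+NT$, $t_k=\underline t+kT$, and let $\mathbf x_0,\dots,\mathbf x_N\in\mathbb{R}^n$. For $k=0,\dots,N-1$ let $r_k:[0,T]\to\mathbb{R}$ be the unique Bézier curve of order $2n-1$ with $r_k^{(j-1)}(0)=x_k^j$ and $r_k^{(j-1)}(T)=x_{k+1}^j$ for $j=1,\dots,n$ (where $\mathbf x_k=(x_k^1,\dots,x_k^n)^\top$), and let $\mathbf r_k(\tau)=(r_k(\tau),r_k^{(1)}(\tau),\dots,r_k^{(n-1)}(\tau))^\top$. Then the function $\mathbf x_d:[\underline t,\overline t]\to\mathbb{R}^n$ defined by $\mathbf x_d(t)=\mathbf r_k(t-t_k)$ for $t\in[t_k,t_{k+1})$, $k=0,\dots,N-1$, and $\mathbf x_d(\overline t)=\mathbf x_N$, is a dynamically admissible trajectory for this system.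
   Context: $A_0\in\mathbb{R}^{n\times n}$ is the matrix $\begin{bmatrix}\mathbf 0&I\\0&\mathbf 0^\top\end{bmatrix}$ (ones on the superdiagonal, zeros elsewhere), and $e_n$ is the last standard basis vector of $\mathbb{R}^n$. A Bézier curve of order $p$ on $[0,T]$ is $r(\tau)=\boldsymbol\xi^\top\mathbf z(\tau)=\sum_{i=0}^p\xi_i z_i(\tau)$ with control points $\xi_i\in\mathbb{R}$ and Bernstein polynomials $z_i(\tau)=\binom{p}{i}(\tau/T)^i(1-\tau/T)^{p-i}$. (For order $2n-1$, the $2n$ boundary conditions above determine the control points uniquely.) A piecewise continuously differentiable function $\mathbf x_d:[\underline t,\overline t]\to\mathbb{R}^n$ (continuous, with derivative on the open intervals of a finite partition having one-sided limits) is a dynamically admissible trajectory if there is a piecewise continuous $u_d:[\underline t,\overline t]\to\mathbb{R}$ with $\dot{\mathbf x}_d(t)=\mathbf f(\mathbf x_d(t))+\mathbf g(\mathbf x_d(t))u_d(t)$ for almost all $t\in[\underline t,\overline t]$. *)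

theory Defs
  imports "HOL-Analysis.Analysis"
begin

text \<open>Coordinates of R^n are indexed by a finite linearly ordered type 'n;
  the coordinate i is the (pos i + 1)-th coordinate, pos i in {0..n-1}.\<close>

definition pos :: "'n::{finite,linorder} \<Rightarrow> nat" where
  "pos i = card {j. j < i}"

text \<open>A_0 (ones on the superdiagonal): (A_0 x)_j = x_(j+1) for j < n, and 0 for j = n.\<close>
definition A0 :: "(real,'n::{finite,linorder}) vec \<Rightarrow> (real,'n) vec" where
  "A0 x = (\<chi> i. if (\<exists>j. i < j) then x $ (LEAST j. i < j) else 0)"

definition e_last :: "(real,'n::{finite,linorder}) vec" where
  "e_last = (\<chi> i. if (\<forall>j. j \<le> i) then 1 else 0)"

definition sys_f :: "((real,'n::{finite,linorder}) vec \<Rightarrow> real) \<Rightarrow> (real,'n) vec \<Rightarrow> (real,'n) vec" where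
  "sys_f f x = A0 x + f x *\<^sub>R e_last"

definition sys_g :: "((real,'n::{finite,linorder}) vec \<Rightarrow> real) \<Rightarrow> (real,'n) vec \<Rightarrow> (real,'n) vec" where
  "sys_g g x = g x *\<^sub>R e_last"

definition C1_fun :: "((real,'n::finite) vec \<Rightarrow> real) \<Rightarrow> bool" where
  "C1_fun f \<longleftrightarrow> (\<exists>f' :: (real,'n) vec \<Rightarrow> ((real,'n) vec \<Rightarrow>\<^sub>L real).
      (\<forall>x. (f has_derivative blinfun_apply (f' x)) (at x)) \<and> continuous_on UNIV f')"

definition bernstein :: "real \<Rightarrow> nat \<Rightarrow> nat \<Rightarrow> real \<Rightarrow> real" where
  "bernstein T p i \<tau> = real (p choose i) * (\<tau> / T) ^ i * (1 - \<tau> / T) ^ (p - i)"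

definition bezier :: "real \<Rightarrow> nat \<Rightarrow> (nat \<Rightarrow> real) \<Rightarrow> real \<Rightarrow> real" where
  "bezier T p \<xi> \<tau> = (\<Sum>i\<le>p. \<xi> i * bernstein T p i \<tau>)"

text \<open>Piecewise continuously differentiable on [a,b]: continuous, and there is a finite
  partition such that on each open subinterval the function has a derivative that extends
  continuously to the closed subinterval (i.e. has one-sided limits).\<close>
definition partition_of :: "real set \<Rightarrow> real \<Rightarrow> real \<Rightarrow> bool" where
  "partition_of P a b \<longleftrightarrow> finite P \<and> P \<subseteq> {a..b} \<and> a \<in> P \<and> b \<in> P"

definition adjacent :: "real set \<Rightarrow> real \<Rightarrow> real \<Rightarrow> bool" where
  "adjacent P s s' \<longleftrightarrow> s \<in> P \<and> s' \<in> P \<and> s < s' \<and> {s<..<s'} \<inter> P = {}"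

definition piecewise_C1 :: "(real \<Rightarrow> 'a::real_normed_vector) \<Rightarrow> real \<Rightarrow> real \<Rightarrow> bool" where
  "piecewise_C1 x a b \<longleftrightarrow> continuous_on {a..b} x \<and>
     (\<exists>P. partition_of P a b \<and> (\<forall>s s'. adjacent P s s' \<longrightarrow>
        (\<exists>D. continuous_on {s..s'} D \<and> (\<forall>t\<in>{s<..<s'}. (x has_vector_derivative D t) (at t)))))"

definition piecewise_cont :: "(real \<Rightarrow> 'a::real_normed_vector) \<Rightarrow> real \<Rightarrow> real \<Rightarrow> bool" where
  "piecewise_cont u a b \<longleftrightarrow>
     (\<exists>P. partition_of P a b \<and> (\<forall>s s'. adjacent P s s' \<longrightarrow>
        (\<exists>D. continuous_on {s..s'} D \<and> (\<forall>t\<in>{s<..<s'}. u t = D t))))"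

definition dyn_admissible ::
  "('v::real_normed_vector \<Rightarrow> 'v) \<Rightarrow> ('v \<Rightarrow> 'v) \<Rightarrow> (real \<Rightarrow> 'v) \<Rightarrow> real \<Rightarrow> real \<Rightarrow> bool" where
  "dyn_admissible F G xd a b \<longleftrightarrow> piecewise_C1 xd a b \<and>
     (\<exists>ud :: real \<Rightarrow> real. piecewise_cont ud a b \<and>
        (AE t in lborel. t \<in> {a..b} \<longrightarrow>
           (xd has_vector_derivative (F (xd t) + ud t *\<^sub>R G (xd t))) (at t)))"

end

theory Submission
  imports Defs "HOL-Computational_Algebra.Polynomial"
begin

text \<open>A Bezier curve is a polynomial r, and the vector of its derivatives
  (r, r', ..., r^(n-1)) obeys the chain-of-integrators equation
  d/dt (r, ..., r^(n-1)) = A_0 (r, ..., r^(n-1)) + r^(n) e_n.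
  Because g never vanishes, the input u = (r^(n) - f) / g turns this into the control
  system, and u is continuous on each piece since f and g are. The boundary conditions
  make consecutive pieces agree at the grid points t_k, so the glued trajectory is
  continuous, and the grid is a null set, off which the derivative exists.\<close>

definition bezier_poly :: "real \<Rightarrow> nat \<Rightarrow> (nat \<Rightarrow> real) \<Rightarrow> real poly" where
  "bezier_poly T p \<xi> = (\<Sum>i\<le>p. smult (\<xi> i * real (p choose i)) ([:0, 1/T:] ^ i * [:1, -1/T:] ^ (p - i)))"

lemma poly_bezier_poly: "poly (bezier_poly T p \<xi>) = bezier T p \<xi>"
  by (rule ext) (simp add: bezier_poly_def bezier_def bernstein_def poly_sum poly_power field_simps)

lemma funpow_deriv_poly: "(deriv ^^ m) (poly P) = poly ((pderiv ^^ m) P)"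
proof (induction m)
  case (Suc m)
  then show ?case by (auto intro!: ext DERIV_imp_deriv)
qed simp

lemma vec_lambda_eq_sum_axis: "(\<chi> i. h i) = (\<Sum>i\<in>UNIV. h i *\<^sub>R axis i (1::real))"
  by (simp add: vec_eq_iff sum_component axis_def if_distrib sum.delta cong: if_cong)

lemma has_vector_derivative_vec_lambda:
  assumes "\<And>i. (h i has_real_derivative h' i) (at t)"
  shows "((\<lambda>s. \<chi> i. h i s) has_vector_derivative (\<chi> i. h' i :: (real,'n::finite) vec)) (at t)"
  unfolding vec_lambda_eq_sum_axis
proof (rule has_vector_derivative_sum)
  fix i
  show "((\<lambda>s. h i s *\<^sub>R axis i 1) has_vector_derivative h' i *\<^sub>R axis i 1) (at t)"
    using has_vector_derivative_scaleR[OF assms has_vector_derivative_const] by simp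
qed

lemma pos_Least_greater:
  fixes i :: "'n::{finite,linorder}"
  assumes "\<exists>j. i < j"
  shows "pos (LEAST j. i < j) = Suc (pos i)"
proof -
  let ?s = "LEAST j. i < j"
  have s_Min: "?s = Min {j. i < j}"
    by (rule Least_Min) (use assms in auto)
  have "i < ?s"
    using assms unfolding s_Min by (subst Min_gr_iff) auto
  moreover have "?s \<le> j" if "i < j" for j
    unfolding s_Min using that by (intro Min_le) auto
  ultimately have "{j. j < ?s} = insert i {j. j < i}"
    by (auto simp: not_le[symmetric])
  then show ?thesis
    unfolding pos_def by simp
qed

lemma pos_greatest:
  fixes i :: "'n::{finite,linorder}"
  assumes "\<forall>j. j \<le> i"
  shows "pos i = CARD('n) - 1"
proof -
  have "{j. j < i} = UNIV - {i}"
    using assms by (auto simp: order.strict_iff_order)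
  then show ?thesis
    unfolding pos_def by (simp add: card_Diff_singleton)
qed

definition poly_jet :: "real poly \<Rightarrow> real \<Rightarrow> (real,'n::{finite,linorder}) vec" where
  "poly_jet Q \<tau> = (\<chi> i. poly ((pderiv ^^ pos i) Q) \<tau>)"

lemma continuous_on_poly_jet: "continuous_on S (poly_jet Q)"
  unfolding poly_jet_def by (intro continuous_intros)

lemma poly_jet_has_vector_derivative:
  "(poly_jet Q has_vector_derivative poly_jet (pderiv Q) \<tau>) (at \<tau>)"
  unfolding poly_jet_def
  by (rule has_vector_derivative_vec_lambda) (metis funpow_swap1 poly_DERIV)

lemma poly_jet_pderiv:
  "poly_jet (pderiv Q) \<tau> =
     A0 (poly_jet Q \<tau>) + poly ((pderiv ^^ CARD('n)) Q) \<tau> *\<^sub>R (e_last :: (real,'n::{finite,linorder}) vec)"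
proof (subst vec_eq_iff, intro allI)
  fix i :: 'n
  show "poly_jet (pderiv Q) \<tau> $ i = (A0 (poly_jet Q \<tau>) + poly ((pderiv ^^ CARD('n)) Q) \<tau> *\<^sub>R e_last) $ i"
  proof (cases "\<exists>j. i < j")
    case True
    then show ?thesis
      by (auto simp: poly_jet_def A0_def e_last_def pos_Least_greater funpow_swap1 not_le[symmetric])
  next
    case False
    then have "\<forall>j. j \<le> i"
      by (auto simp: not_less)
    moreover have "(pderiv ^^ CARD('n)) Q = (pderiv ^^ (CARD('n) - 1)) (pderiv Q)"
      using funpow_Suc_right[of "CARD('n) - 1" "pderiv :: real poly \<Rightarrow> _"] by simp
    ultimately show ?thesis
      using False by (auto simp: poly_jet_def A0_def e_last_def pos_greatest)
  qed
qed

lemma A0_plus_e_last_eq_control_system: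
  assumes "g y \<noteq> 0"
  shows "A0 y + v *\<^sub>R e_last = sys_f f y + ((v - f y) / g y) *\<^sub>R sys_g g y"
  using assms by (simp add: sys_f_def sys_g_def scaleR_diff_left)

definition grid :: "real \<Rightarrow> real \<Rightarrow> nat \<Rightarrow> real set" where
  "grid a T N = (\<lambda>k. a + real k * T) ` {..N}"

lemma partition_of_grid:
  assumes "T > 0"
  shows "partition_of (grid a T N) a (a + real N * T)"
  unfolding partition_of_def grid_def
proof (intro conjI)
  show "(\<lambda>k. a + real k * T) ` {..N} \<subseteq> {a..a + real N * T}"
    using assms by auto
  show "a \<in> (\<lambda>k. a + real k * T) ` {..N}"
    by (rule image_eqI[of _ _ 0]) auto
qed auto

lemma adjacent_grid:
  assumes "T > 0" and "adjacent (grid a T N) s s'"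
  shows "\<exists>k<N. s = a + real k * T \<and> s' = a + real (Suc k) * T"
proof -
  from assms(2) obtain i j where ij: "i \<le> N" "j \<le> N" "s = a + real i * T" "s' = a + real j * T"
    and "s < s'" and gap: "{s<..<s'} \<inter> grid a T N = {}"
    unfolding adjacent_def grid_def by auto
  have "i < j"
    using \<open>s < s'\<close> ij assms(1) by simp
  moreover have "\<not> Suc i < j"
  proof
    assume "Suc i < j"
    then have "a + real (Suc i) * T \<in> grid a T N"
      using ij unfolding grid_def by (intro image_eqI[of _ _ "Suc i"]) auto
    moreover have "a + real (Suc i) * T \<in> {s<..<s'}"
      using \<open>Suc i < j\<close> ij assms(1) by auto
    ultimately have "a + real (Suc i) * T \<in> {s<..<s'} \<inter> grid a T N"
      by blast
    with gap show False
      by blast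
  qed
  ultimately show ?thesis
    using ij by (intro exI[of _ i]) auto
qed

lemma floor_in_grid_cell:
  assumes "T > 0" and "a + real k * T \<le> t" and "t < a + real (Suc k) * T"
  shows "nat \<lfloor>(t - a) / T\<rfloor> = k"
proof -
  have "real k \<le> (t - a) / T" and "(t - a) / T < real k + 1"
    using assms by (auto simp: field_simps)
  then show ?thesis
    by linarith
qed

lemma in_grid_cell:
  assumes "T > 0" and "t \<in> {a..a + real N * T}" and "t \<notin> grid a T N"
  shows "\<exists>k<N. a + real k * T < t \<and> t < a + real (Suc k) * T"
proof -
  define k where "k = nat \<lfloor>(t - a) / T\<rfloor>"
  have "real k \<le> (t - a) / T" and "(t - a) / T < real k + 1"
    unfolding k_def using assms(1,2) by (auto simp: divide_nonneg_pos)
  then have cell: "a + real k * T \<le> t" "t < a + real (Suc k) * T"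
    using assms(1) by (auto simp: field_simps)
  have "k < N"
  proof (rule ccontr)
    assume "\<not> k < N"
    then have "real N * T \<le> real k * T"
      using assms(1) by (intro mult_right_mono) auto
    then have "a + real N * T \<le> t"
      using cell(1) by linarith
    then have "t \<in> grid a T N"
      using assms(2) unfolding grid_def by auto
    with assms(3) show False ..
  qed
  moreover have "t \<noteq> a + real k * T"
    using assms(3) \<open>k < N\<close> unfolding grid_def by auto
  ultimately show ?thesis
    using cell by (intro exI[of _ k]) auto
qed

lemma continuous_on_grid_cells:
  assumes "T > 0"
    and "\<forall>k<N. continuous_on {a + real k * T..a + real (Suc k) * T} x"
  shows "continuous_on {a..a + real N * T} x"
  using assms(2)
proof (induction N)
  case 0
  then show ?case by simp
next
  case (Suc m)
  have "{a..a + real m * T} \<union> {a + real m * T..a + real (Suc m) * T} = {a..a + real (Suc m) * T}"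
    using assms(1) by (intro ivl_disj_un_two_touch(4)) (auto simp: distrib_right)
  with Suc show ?case
    by (metis continuous_on_closed_Un closed_atLeastAtMost less_SucI lessI)
qed

lemma grid_closed_cells:
  assumes "T > 0"
    and pieces: "\<forall>k<N. \<forall>t. a + real k * T \<le> t \<and> t < a + real (Suc k) * T \<longrightarrow>
        xd t = X k (t - (a + real k * T))"
    and start: "\<forall>k<N. X k 0 = y k" and stop: "\<forall>k<N. X k T = y (Suc k)"
    and last: "xd (a + real N * T) = y N"
  shows "\<forall>k<N. \<forall>t\<in>{a + real k * T..a + real (Suc k) * T}. xd t = X k (t - (a + real k * T))"
proof (intro allI impI ballI)
  fix k t
  assume "k < N" and t: "t \<in> {a + real k * T..a + real (Suc k) * T}"
  show "xd t = X k (t - (a + real k * T))"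
  proof (cases "t = a + real (Suc k) * T")
    case True
    have "xd t = y (Suc k)"
    proof (cases "Suc k < N")
      case True
      then show ?thesis
        using pieces start \<open>t = a + real (Suc k) * T\<close> assms(1) by force
    next
      case False
      then have "Suc k = N"
        using \<open>k < N\<close> by simp
      then show ?thesis
        using last \<open>t = a + real (Suc k) * T\<close> by simp
    qed
    moreover have "t - (a + real k * T) = T"
      using True by (simp add: algebra_simps)
    ultimately show ?thesis
      using stop \<open>k < N\<close> by simp
  next
    case False
    then show ?thesis
      using pieces \<open>k < N\<close> t by simp
  qed
qed

lemma dyn_admissible_on_grid:
  fixes X X' :: "nat \<Rightarrow> real \<Rightarrow> 'v::real_normed_vector" and U :: "nat \<Rightarrow> real \<Rightarrow> real"
  assumes "T > 0"
    and cells: "\<forall>k<N. \<forall>t\<in>{a + real k * T..a + real (Suc k) * T}. xd t = X k (t - (a + real k * T))"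
    and X_deriv: "\<And>k \<tau>. (X k has_vector_derivative X' k \<tau>) (at \<tau>)"
    and X'_cont: "\<And>k. continuous_on UNIV (X' k)"
    and U_cont: "\<And>k. continuous_on UNIV (U k)"
    and solves: "\<And>k \<tau>. X' k \<tau> = F (X k \<tau>) + U k \<tau> *\<^sub>R G (X k \<tau>)"
  shows "dyn_admissible F G xd a (a + real N * T)"
proof -
  define tk where "tk k = a + real k * T" for k
  define ud where "ud t = U (nat \<lfloor>(t - a) / T\<rfloor>) (t - tk (nat \<lfloor>(t - a) / T\<rfloor>))" for t
  have partition: "partition_of (grid a T N) a (a + real N * T)"
    using partition_of_grid assms(1) .
  have adjacent: "\<exists>k<N. s = tk k \<and> s' = tk (Suc k)" if "adjacent (grid a T N) s s'" for s s'
    using adjacent_grid[OF assms(1) that] unfolding tk_def .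
  have shift_cont: "continuous_on S (\<lambda>t. h (t - c))" if "continuous_on UNIV h" for S c
    and h :: "real \<Rightarrow> 'b::topological_space"
    by (rule continuous_on_compose2[OF that]) (auto intro: continuous_intros)
  have X_cont: "continuous_on UNIV (X k)" for k
    by (metis X_deriv continuous_at_imp_continuous_on has_vector_derivative_continuous)
  have cell_deriv: "(xd has_vector_derivative X' k (t - tk k)) (at t)"
    if "k < N" "tk k < t" "t < tk (Suc k)" for k t
  proof (rule has_vector_derivative_transform_within_open)
    show "((\<lambda>s. X k (s - tk k)) has_vector_derivative X' k (t - tk k)) (at t)"
      using vector_diff_chain_at[OF has_vector_derivative_diff[OF has_vector_derivative_id
            has_vector_derivative_const] X_deriv] by (simp add: o_def)
    show "t \<in> {tk k<..<tk (Suc k)}"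
      using that by simp
    show "X k (s - tk k) = xd s" if "s \<in> {tk k<..<tk (Suc k)}" for s
      using cells \<open>k < N\<close> that unfolding tk_def by simp
  qed simp
  have cell_ud: "ud t = U k (t - tk k)" if "tk k \<le> t" "t < tk (Suc k)" for k t
    using floor_in_grid_cell[OF assms(1)] that unfolding ud_def tk_def by simp
  have grid_null: "AE t in lborel. t \<notin> grid a T N"
    by (intro AE_not_in finite_imp_null_set_lborel) (simp add: grid_def)
  have "piecewise_C1 xd a (a + real N * T)"
    unfolding piecewise_C1_def
  proof (intro conjI exI[of _ "grid a T N"] partition allI impI)
    have "continuous_on {tk k..tk (Suc k)} xd" if "k < N" for k
      using shift_cont[OF X_cont, of "{tk k..tk (Suc k)}" k "tk k"] cells that
      unfolding tk_def by (auto intro: continuous_on_eq)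
    then show "continuous_on {a..a + real N * T} xd"
      using continuous_on_grid_cells[OF assms(1)] unfolding tk_def by blast
    fix s s'
    assume "adjacent (grid a T N) s s'"
    then obtain k where "k < N" "s = tk k" "s' = tk (Suc k)"
      using adjacent by blast
    then show "\<exists>D. continuous_on {s..s'} D \<and> (\<forall>t\<in>{s<..<s'}. (xd has_vector_derivative D t) (at t))"
      using cell_deriv shift_cont[OF X'_cont] by (intro exI[of _ "\<lambda>t. X' k (t - tk k)"]) auto
  qed
  moreover have "piecewise_cont ud a (a + real N * T)"
    unfolding piecewise_cont_def
  proof (intro exI[of _ "grid a T N"] conjI partition allI impI)
    fix s s'
    assume "adjacent (grid a T N) s s'"
    then obtain k where "k < N" "s = tk k" "s' = tk (Suc k)"
      using adjacent by blast
    then show "\<exists>D. continuous_on {s..s'} D \<and> (\<forall>t\<in>{s<..<s'}. ud t = D t)"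
      using cell_ud shift_cont[OF U_cont] by (intro exI[of _ "\<lambda>t. U k (t - tk k)"]) auto
  qed
  moreover from grid_null have "AE t in lborel. t \<in> {a..a + real N * T} \<longrightarrow>
      (xd has_vector_derivative (F (xd t) + ud t *\<^sub>R G (xd t))) (at t)"
  proof (rule eventually_mono, intro impI)
    fix t
    assume "t \<notin> grid a T N" and "t \<in> {a..a + real N * T}"
    then obtain k where k: "k < N" "tk k < t" "t < tk (Suc k)"
      using in_grid_cell[OF assms(1)] unfolding tk_def by blast
    then have "xd t = X k (t - tk k)"
      using cells unfolding tk_def by auto
    then show "(xd has_vector_derivative (F (xd t) + ud t *\<^sub>R G (xd t))) (at t)"
      using cell_deriv[OF k] cell_ud[of k t] k solves by simp
  qed
  ultimately show ?thesis
    unfolding dyn_admissible_def by blast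
qed

lemma continuous_on_of_C1_fun: "C1_fun f \<Longrightarrow> continuous_on UNIV f"
  unfolding C1_fun_def
  by (metis continuous_at_imp_continuous_on has_derivative_continuous)

theorem lemma2:
  fixes f g :: "(real,'n::{finite,linorder}) vec \<Rightarrow> real"
    and N :: nat and T t_lo :: real
    and x :: "nat \<Rightarrow> (real,'n) vec"
    and \<xi> :: "nat \<Rightarrow> nat \<Rightarrow> real"
    and xd :: "real \<Rightarrow> (real,'n) vec"
  assumes "C1_fun f" and "C1_fun g"
    and "f 0 = 0" and "\<forall>y. g y \<noteq> 0"
    and "T > 0" and "t_lo \<ge> 0"
    and bez0: "\<forall>k<N. \<forall>i. (deriv ^^ pos i) (bezier T (2 * CARD('n) - 1) (\<xi> k)) 0 = x k $ i"
    and bezT: "\<forall>k<N. \<forall>i. (deriv ^^ pos i) (bezier T (2 * CARD('n) - 1) (\<xi> k)) T = x (Suc k) $ i"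
    and xd_pieces: "\<forall>k<N. \<forall>t. t_lo + real k * T \<le> t \<and> t < t_lo + real (Suc k) * T \<longrightarrow>
        xd t = (\<chi> i. (deriv ^^ pos i) (bezier T (2 * CARD('n) - 1) (\<xi> k)) (t - (t_lo + real k * T)))"
    and xd_end: "xd (t_lo + real N * T) = x N"
  shows "dyn_admissible (sys_f f) (sys_g g) xd t_lo (t_lo + real N * T)"
proof -
  define P where "P k = bezier_poly T (2 * CARD('n) - 1) (\<xi> k)" for k
  have jet: "(\<chi> i. (deriv ^^ pos i) (bezier T (2 * CARD('n) - 1) (\<xi> k)) \<tau>) = poly_jet (P k) \<tau>" for k \<tau>
    by (simp add: P_def funpow_deriv_poly poly_jet_def flip: poly_bezier_poly)
  have cells: "\<forall>k<N. \<forall>t\<in>{t_lo + real k * T..t_lo + real (Suc k) * T}.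
      xd t = poly_jet (P k) (t - (t_lo + real k * T))"
    by (rule grid_closed_cells[where y = x]) (use \<open>T > 0\<close> xd_pieces bez0 bezT xd_end in
        \<open>simp_all add: jet[symmetric] vec_eq_iff\<close>)
  define u where "u k \<tau> = (poly ((pderiv ^^ CARD('n)) (P k)) \<tau> - f (poly_jet (P k) \<tau>)) / g (poly_jet (P k) \<tau>)"
    for k \<tau>
  have "continuous_on UNIV f" and "continuous_on UNIV g"
    using \<open>C1_fun f\<close> \<open>C1_fun g\<close> by (simp_all add: continuous_on_of_C1_fun)
  then have u_cont: "continuous_on UNIV (u k)" for k
    unfolding u_def using \<open>\<forall>y. g y \<noteq> 0\<close>
    by (intro continuous_intros continuous_on_compose2[OF _ continuous_on_poly_jet]) auto
  have feedback: "poly_jet (pderiv (P k)) \<tau> = sys_f f (poly_jet (P k) \<tau>) + u k \<tau> *\<^sub>R sys_g g (poly_jet (P k) \<tau>)"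
    for k \<tau>
    unfolding poly_jet_pderiv u_def using \<open>\<forall>y. g y \<noteq> 0\<close> by (simp add: A0_plus_e_last_eq_control_system)
  show ?thesis
    by (rule dyn_admissible_on_grid[OF \<open>T > 0\<close> cells poly_jet_has_vector_derivative
          continuous_on_poly_jet u_cont feedback])
qed

end
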